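(* Let $m$ be an odd positive integer and $n$ a positive integer. Let $(X,\mu)$ be a measure space, $\{\psi_{i,j}\}_{1\le i\le m,\,1\le j\le 2n}$ complex-valued functions on $X$, and $\epsilon:X\times X\to\mathbb{C}$ with $\epsilon(y,x)=-\epsilon(x,y)$. Suppose $$Q(i_1,\dots,i_{2m})=\frac12\int_{X^2}\epsilon(x,y)\prod_{s=1}^m\det\begin{pmatrix}\psi_{s,i_{2s-1}}(x)&\psi_{s,i_{2s-1}}(y)\\ \psi_{s,i_{2s}}(x)&\psi_{s,i_{2s}}(y)\end{pmatrix}\mu(\mathrm{d}x)\mu(\mathrm{d}y)$$ is well-defined for all $1\le i_1,\dots,i_{2m}\le 2n$. Then $$\frac{1}{(2n)!}\int_{X^{2n}}\mathrm{pf}\big(\epsilon(x_i,x_j)\big)_{1\le i,j\le 2n}\prod_{s=1}^m\det\big(\psi_{s,j}(x_k)\big)_{1\le j,k\le 2n}\prod_{j=1}^{2n}\mu(\mathrm{d}x_j)=\mathrm{Pf}^{[2m]}\big(Q(i_1,\dots,i_{2m})\big)_{1\le i_1,\dots,i_{2m}\le 2n}.$$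
   Context: $\mathrm{pf}$ is the ordinary Pfaffian of an antisymmetric matrix. The array $Q$ satisfies the alternation condition: for each $s$, interchanging $i_{2s-1}$ and $i_{2s}$ changes its sign. For such an array $B$ indexed by $\{1,\dots,2n\}^{2m}$, with $\mathfrak{E}_{2n}=\{\sigma\in\mathfrak{S}_{2n}:\sigma(2i-1)<\sigma(2i),\ 1\le i\le n\}$, the hyperpfaffian is $$\mathrm{Pf}^{[2m]}(B):=\frac{1}{n!}\sum_{\sigma_1,\dots,\sigma_m\in\mathfrak{E}_{2n}}\mathrm{sgn}(\sigma_1)\cdots\mathrm{sgn}(\sigma_m)\prod_{i=1}^nB(\sigma_1(2i-1),\sigma_1(2i),\dots,\sigma_m(2i-1),\sigma_m(2i)).$$ *)

theory Defs
  imports "HOL-Analysis.Analysis" "HOL-Combinatorics.Permutations"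
begin

definition det_on :: "nat \<Rightarrow> (nat \<Rightarrow> nat \<Rightarrow> complex) \<Rightarrow> complex" where
  "det_on N A = (\<Sum>p | p permutes {1..N}. of_int (sign p) * (\<Prod>j\<in>{1..N}. A j (p j)))"

definition pf :: "nat \<Rightarrow> (nat \<Rightarrow> nat \<Rightarrow> complex) \<Rightarrow> complex" where
  "pf n A = (1 / (2 ^ n * fact n)) *
     (\<Sum>p | p permutes {1..2*n}. of_int (sign p) * (\<Prod>i\<in>{1..n}. A (p (2*i-1)) (p (2*i))))"

definition E2n :: "nat \<Rightarrow> (nat \<Rightarrow> nat) set" where
  "E2n n = {p. p permutes {1..2*n} \<and> (\<forall>i\<in>{1..n}. p (2*i-1) < p (2*i))}"

text \<open>Hyperpfaffian Pf^[2m] of an array B indexed by {1..2n}^{2m};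
  the index tuple (i_1,...,i_{2m}) is represented as a list of length 2m.\<close>
definition hyperpf :: "nat \<Rightarrow> nat \<Rightarrow> (nat list \<Rightarrow> complex) \<Rightarrow> complex" where
  "hyperpf m n B = (1 / fact n) *
     (\<Sum>\<tau>\<in>Pi\<^sub>E {1..m} (\<lambda>_. E2n n).
        (\<Prod>s\<in>{1..m}. of_int (sign (\<tau> s))) *
        (\<Prod>i\<in>{1..n}. B (concat (map (\<lambda>s. [\<tau> s (2*i-1), \<tau> s (2*i)]) [1..<m+1]))))"

text \<open>The integrand defining Q(i_1,...,i_{2m}) (before the factor 1/2 and integration).\<close>
definition Q_integrand ::
  "nat \<Rightarrow> (nat \<Rightarrow> nat \<Rightarrow> 'a \<Rightarrow> complex) \<Rightarrow> ('a \<Rightarrow> 'a \<Rightarrow> complex) \<Rightarrow> nat list \<Rightarrow> 'a \<times> 'a \<Rightarrow> complex" where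
  "Q_integrand m \<psi> \<epsilon> is = (\<lambda>(x, y). \<epsilon> x y *
     (\<Prod>s\<in>{1..m}. \<psi> s (is ! (2 * s - 2)) x * \<psi> s (is ! (2 * s - 1)) y
                  - \<psi> s (is ! (2 * s - 2)) y * \<psi> s (is ! (2 * s - 1)) x))"

end

(*
  The Pfaffian pf (eps (x_i, x_j)) is the normalised sum over all p in S_2n of
  sgn p * prod_i eps (x_p(2i-1), x_p(2i)). As m is odd, F x = prod_s det (psi_s,j (x_k)) is
  alternating in the points, so every term equals the weight
  h y = prod_i eps (y_(2i-1), y_(2i)) * F y at y = x o p. The product measure is invariant
  under permutations of the coordinates, hence the left-hand integral is (2n)!/(2^n n!)
  times the integral of h.

  Expanding each determinant along the column pairs (2i-1, 2i) writes it as a signed sum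
  over E_2n of products of 2x2 minors. Multiplied out, h becomes a signed sum over
  (sigma_1, ..., sigma_m) in E_2n^m of products over i of the integrands defining Q,
  evaluated at (y_(2i-1), y_(2i)); by Fubini each product integrates to the product of the
  Q-values, and the sum is the hyperpfaffian.
*)

theory Submission
  imports Defs
begin

lemma prod_atLeastAtMost_pairs:
  fixes f :: "nat \<Rightarrow> 'a::comm_monoid_mult"
  shows "(\<Prod>k\<in>{1..2*n}. f k) = (\<Prod>i\<in>{1..n}. f (2*i-1) * f (2*i))"
proof (induction n)
  case (Suc n)
  have "{1..2 * Suc n} = insert (2*n+2) (insert (2*n+1) {1..2*n})" by auto
  with Suc show ?case by (simp add: ac_simps)
qed simp

lemma atLeastAtMost_pairs_cases:
  fixes k n :: nat
  assumes "k \<in> {1..2*n}"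
  obtains i where "i \<in> {1..n}" "k = 2*i-1 \<or> k = 2*i"
  using assms by (intro that[of "(k+1) div 2"]) auto

section \<open>Permuting and pairing the coordinates of a product measure\<close>

lemma measurable_PiM_permute:
  assumes "p permutes I"
  shows "(\<lambda>x. \<lambda>k\<in>I. x (p k)) \<in> Pi\<^sub>M I (\<lambda>_. M) \<rightarrow>\<^sub>M Pi\<^sub>M I (\<lambda>_. M)"
  using assms by (intro measurable_restrict measurable_component_singleton) (simp add: permutes_in_image)

lemma vimage_permute_PiE:
  assumes p: "p permutes I" and A: "\<And>k. k \<in> I \<Longrightarrow> A k \<subseteq> space M"
  shows "(\<lambda>x. \<lambda>k\<in>I. x (p k)) -` Pi\<^sub>E I A \<inter> space (Pi\<^sub>M I (\<lambda>_. M)) = Pi\<^sub>E I (\<lambda>k. A (inv p k))"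
proof (intro set_eqI iffI)
  have ip: "inv p permutes I" using p by (rule permutes_inv)
  fix x
  show "x \<in> Pi\<^sub>E I (\<lambda>k. A (inv p k))"
    if "x \<in> (\<lambda>x. \<lambda>k\<in>I. x (p k)) -` Pi\<^sub>E I A \<inter> space (Pi\<^sub>M I (\<lambda>_. M))"
    using that ip by (auto simp: space_PiM PiE_iff permutes_in_image)
      (metis permutes_in_image permutes_inverses(1)[OF p])
  show "x \<in> (\<lambda>x. \<lambda>k\<in>I. x (p k)) -` Pi\<^sub>E I A \<inter> space (Pi\<^sub>M I (\<lambda>_. M))"
    if x: "x \<in> Pi\<^sub>E I (\<lambda>k. A (inv p k))"
  proof -
    have "x (p k) \<in> A k" if "k \<in> I" for k
      using x p that by (metis PiE_mem permutes_in_image permutes_inverses(2))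
    moreover have "x k \<in> space M" if "k \<in> I" for k
      using x A ip that by (meson PiE_mem permutes_in_image subsetD)
    ultimately show ?thesis
      using x by (auto simp: space_PiM PiE_iff)
  qed
qed

lemma distr_PiM_permute:
  assumes M: "sigma_finite_measure M" and I: "finite I" and p: "p permutes I"
  shows "distr (Pi\<^sub>M I (\<lambda>_. M)) (Pi\<^sub>M I (\<lambda>_. M)) (\<lambda>x. \<lambda>k\<in>I. x (p k)) = Pi\<^sub>M I (\<lambda>_. M)"
proof (rule product_sigma_finite.PiM_eqI[OF _ I])
  show "product_sigma_finite (\<lambda>_. M)" using M by (simp add: product_sigma_finite_def)
  fix A assume A: "\<And>i. i \<in> I \<Longrightarrow> A i \<in> sets M"
  have ip: "inv p permutes I" using p by (rule permutes_inv)
  have "(\<lambda>x. \<lambda>k\<in>I. x (p k)) -` Pi\<^sub>E I A \<inter> space (Pi\<^sub>M I (\<lambda>_. M)) = Pi\<^sub>E I (\<lambda>k. A (inv p k))"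
    using A by (intro vimage_permute_PiE[OF p] sets.sets_into_space)
  then have "emeasure (distr (Pi\<^sub>M I (\<lambda>_. M)) (Pi\<^sub>M I (\<lambda>_. M)) (\<lambda>x. \<lambda>k\<in>I. x (p k))) (Pi\<^sub>E I A)
      = emeasure (Pi\<^sub>M I (\<lambda>_. M)) (Pi\<^sub>E I (\<lambda>k. A (inv p k)))"
    using A I by (subst emeasure_distr[OF measurable_PiM_permute[OF p]]) (auto intro: sets_PiM_I_finite)
  also have "\<dots> = (\<Prod>k\<in>I. emeasure M (A (inv p k)))"
    using A ip I M by (subst product_sigma_finite.emeasure_PiM)
      (auto simp: permutes_in_image product_sigma_finite_def)
  also have "\<dots> = (\<Prod>k\<in>I. emeasure M (A k))"
    using prod.permute[OF ip, of "\<lambda>k. emeasure M (A k)"] by (simp add: comp_def)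
  finally show "emeasure (distr (Pi\<^sub>M I (\<lambda>_. M)) (Pi\<^sub>M I (\<lambda>_. M)) (\<lambda>x. \<lambda>k\<in>I. x (p k))) (Pi\<^sub>E I A)
      = (\<Prod>k\<in>I. emeasure M (A k))" .
qed simp

lemma has_bochner_integral_PiM_permute:
  fixes f :: "('i \<Rightarrow> 'a) \<Rightarrow> 'b::{banach, second_countable_topology}"
  assumes M: "sigma_finite_measure M" and I: "finite I" and p: "p permutes I"
    and f: "has_bochner_integral (Pi\<^sub>M I (\<lambda>_. M)) f c"
  shows "has_bochner_integral (Pi\<^sub>M I (\<lambda>_. M)) (\<lambda>x. f (\<lambda>k\<in>I. x (p k))) c"
proof -
  note T = measurable_PiM_permute[OF p, of M]
  have "f \<in> borel_measurable (Pi\<^sub>M I (\<lambda>_. M))"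
    using f by (simp add: has_bochner_integral_iff borel_measurable_integrable)
  with f show ?thesis
    by (simp add: has_bochner_integral_iff integral_distr[OF T, symmetric] distr_PiM_permute[OF M I p]
        flip: integrable_distr_eq[OF T])
qed

definition interleave_pairs :: "nat \<Rightarrow> (nat \<Rightarrow> 'a \<times> 'a) \<Rightarrow> nat \<Rightarrow> 'a" where
  "interleave_pairs n z = (\<lambda>k\<in>{1..2*n}. (if odd k then fst else snd) (z ((k+1) div 2)))"

lemma interleave_pairs_odd: "i \<in> {1..n} \<Longrightarrow> interleave_pairs n z (2*i-1) = fst (z i)"
  and interleave_pairs_even: "i \<in> {1..n} \<Longrightarrow> interleave_pairs n z (2*i) = snd (z i)"
  unfolding interleave_pairs_def by auto

lemma interleave_pairs_in_PiE:
  assumes "\<And>i. i \<in> {1..n} \<Longrightarrow> z i \<in> A (2*i-1) \<times> A (2*i)"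
  shows "interleave_pairs n z \<in> Pi\<^sub>E {1..2*n} A"
proof (rule PiE_I)
  fix k assume "k \<in> {1..2*n}"
  then obtain i where "i \<in> {1..n}" "k = 2*i-1 \<or> k = 2*i" by (rule atLeastAtMost_pairs_cases)
  with assms[of i] interleave_pairs_odd[of i n z] interleave_pairs_even[of i n z]
  show "interleave_pairs n z k \<in> A k" by (auto simp: mem_Times_iff)
qed (auto simp: interleave_pairs_def)

lemma measurable_interleave_pairs:
  "interleave_pairs n \<in> Pi\<^sub>M {1..n} (\<lambda>_. M \<Otimes>\<^sub>M M) \<rightarrow>\<^sub>M Pi\<^sub>M {1..2*n} (\<lambda>_. M)"
  unfolding interleave_pairs_def
proof (intro measurable_restrict)
  fix k assume "k \<in> {1..2*n}"
  then have "(k+1) div 2 \<in> {1..n}" by auto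
  then show "(\<lambda>z. (if odd k then fst else snd) (z ((k+1) div 2))) \<in> Pi\<^sub>M {1..n} (\<lambda>_. M \<Otimes>\<^sub>M M) \<rightarrow>\<^sub>M M"
    by (cases "odd k") simp_all
qed

lemma vimage_interleave_pairs_PiE:
  assumes A: "\<And>k. k \<in> {1..2*n} \<Longrightarrow> A k \<subseteq> space M"
  shows "interleave_pairs n -` Pi\<^sub>E {1..2*n} A \<inter> space (Pi\<^sub>M {1..n} (\<lambda>_. M \<Otimes>\<^sub>M M))
    = Pi\<^sub>E {1..n} (\<lambda>i. A (2*i-1) \<times> A (2*i))"
proof (intro set_eqI iffI)
  fix z assume z: "z \<in> interleave_pairs n -` Pi\<^sub>E {1..2*n} A \<inter> space (Pi\<^sub>M {1..n} (\<lambda>_. M \<Otimes>\<^sub>M M))"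
  have "z i \<in> A (2*i-1) \<times> A (2*i)" if i: "i \<in> {1..n}" for i
  proof -
    have "2*i-1 \<in> {1..2*n}" "2*i \<in> {1..2*n}" using i by auto
    then have "interleave_pairs n z (2*i-1) \<in> A (2*i-1)" "interleave_pairs n z (2*i) \<in> A (2*i)"
      using z by (blast intro: PiE_mem)+
    then show ?thesis
      unfolding interleave_pairs_odd[OF i] interleave_pairs_even[OF i] by (simp add: mem_Times_iff)
  qed
  moreover have "z \<in> extensional {1..n}" using z by (simp add: space_PiM PiE_iff)
  ultimately show "z \<in> Pi\<^sub>E {1..n} (\<lambda>i. A (2*i-1) \<times> A (2*i))" by (simp add: PiE_iff)
next
  fix z assume z: "z \<in> Pi\<^sub>E {1..n} (\<lambda>i. A (2*i-1) \<times> A (2*i))"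
  have "A (2*i-1) \<subseteq> space M" "A (2*i) \<subseteq> space M" if "i \<in> {1..n}" for i
    using that by (auto intro!: A)
  then have "Pi\<^sub>E {1..n} (\<lambda>i. A (2*i-1) \<times> A (2*i)) \<subseteq> space (Pi\<^sub>M {1..n} (\<lambda>_. M \<Otimes>\<^sub>M M))"
    unfolding space_PiM space_pair_measure by (intro PiE_mono Sigma_mono)
  moreover have "interleave_pairs n z \<in> Pi\<^sub>E {1..2*n} A"
    by (intro interleave_pairs_in_PiE PiE_mem[OF z])
  ultimately show "z \<in> interleave_pairs n -` Pi\<^sub>E {1..2*n} A \<inter> space (Pi\<^sub>M {1..n} (\<lambda>_. M \<Otimes>\<^sub>M M))"
    using z by blast
qed

lemma distr_interleave_pairs:
  assumes M: "sigma_finite_measure M"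
  shows "distr (Pi\<^sub>M {1..n} (\<lambda>_. M \<Otimes>\<^sub>M M)) (Pi\<^sub>M {1..2*n} (\<lambda>_. M)) (interleave_pairs n)
    = Pi\<^sub>M {1..2*n} (\<lambda>_. M)"
proof (rule product_sigma_finite.PiM_eqI)
  interpret MM: pair_sigma_finite M M using M by (simp add: pair_sigma_finite_def)
  interpret PP: product_sigma_finite "\<lambda>_. M \<Otimes>\<^sub>M M"
    by (simp add: product_sigma_finite_def MM.sigma_finite_measure_axioms)
  show "product_sigma_finite (\<lambda>_. M)" using M by (simp add: product_sigma_finite_def)
  fix A assume A: "\<And>k. k \<in> {1..2*n} \<Longrightarrow> A k \<in> sets M"
  then have A2: "A (2*i-1) \<in> sets M" "A (2*i) \<in> sets M" if "i \<in> {1..n}" for i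
    using that by (auto intro!: A)
  have "interleave_pairs n -` Pi\<^sub>E {1..2*n} A \<inter> space (Pi\<^sub>M {1..n} (\<lambda>_. M \<Otimes>\<^sub>M M))
      = Pi\<^sub>E {1..n} (\<lambda>i. A (2*i-1) \<times> A (2*i))"
    using A by (intro vimage_interleave_pairs_PiE sets.sets_into_space)
  then have "emeasure (distr (Pi\<^sub>M {1..n} (\<lambda>_. M \<Otimes>\<^sub>M M)) (Pi\<^sub>M {1..2*n} (\<lambda>_. M)) (interleave_pairs n))
      (Pi\<^sub>E {1..2*n} A) = emeasure (Pi\<^sub>M {1..n} (\<lambda>_. M \<Otimes>\<^sub>M M)) (Pi\<^sub>E {1..n} (\<lambda>i. A (2*i-1) \<times> A (2*i)))"
    using A by (subst emeasure_distr[OF measurable_interleave_pairs]) (auto intro: sets_PiM_I_finite)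
  also have "\<dots> = (\<Prod>i\<in>{1..n}. emeasure (M \<Otimes>\<^sub>M M) (A (2*i-1) \<times> A (2*i)))"
    using A2 by (subst PP.emeasure_PiM) auto
  also have "\<dots> = (\<Prod>i\<in>{1..n}. emeasure M (A (2*i-1)) * emeasure M (A (2*i)))"
    using A2 by (intro prod.cong refl sigma_finite_measure.emeasure_pair_measure_Times[OF M])
  also have "\<dots> = (\<Prod>k\<in>{1..2*n}. emeasure M (A k))"
    by (rule prod_atLeastAtMost_pairs[symmetric])
  finally show "emeasure (distr (Pi\<^sub>M {1..n} (\<lambda>_. M \<Otimes>\<^sub>M M)) (Pi\<^sub>M {1..2*n} (\<lambda>_. M)) (interleave_pairs n))
      (Pi\<^sub>E {1..2*n} A) = (\<Prod>k\<in>{1..2*n}. emeasure M (A k))" .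
qed simp_all

lemma has_bochner_integral_prod_pairs:
  fixes g :: "nat \<Rightarrow> 'a \<times> 'a \<Rightarrow> 'b::{real_normed_field, banach, second_countable_topology}"
  assumes M: "sigma_finite_measure M" and g: "\<And>i. i \<in> {1..n} \<Longrightarrow> integrable (M \<Otimes>\<^sub>M M) (g i)"
  shows "has_bochner_integral (Pi\<^sub>M {1..2*n} (\<lambda>_. M))
    (\<lambda>y. \<Prod>i\<in>{1..n}. g i (y (2*i-1), y (2*i))) (\<Prod>i\<in>{1..n}. \<integral>z. g i z \<partial>(M \<Otimes>\<^sub>M M))"
proof -
  interpret MM: pair_sigma_finite M M using M by (simp add: pair_sigma_finite_def)
  interpret PP: product_sigma_finite "\<lambda>_. M \<Otimes>\<^sub>M M"
    by (simp add: product_sigma_finite_def MM.sigma_finite_measure_axioms)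
  have "(\<lambda>y. (y (2*i-1), y (2*i))) \<in> Pi\<^sub>M {1..2*n} (\<lambda>_. M) \<rightarrow>\<^sub>M M \<Otimes>\<^sub>M M" if "i \<in> {1..n}" for i
    using that by (intro measurable_Pair measurable_component_singleton) auto
  then have meas: "(\<lambda>y. \<Prod>i\<in>{1..n}. g i (y (2*i-1), y (2*i))) \<in> borel_measurable (Pi\<^sub>M {1..2*n} (\<lambda>_. M))"
    using g by (intro borel_measurable_prod measurable_compose[OF _ borel_measurable_integrable]) auto
  have "has_bochner_integral (Pi\<^sub>M {1..n} (\<lambda>_. M \<Otimes>\<^sub>M M)) (\<lambda>z. \<Prod>i\<in>{1..n}. g i (z i))
      (\<Prod>i\<in>{1..n}. \<integral>z. g i z \<partial>(M \<Otimes>\<^sub>M M))"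
    using g by (simp add: has_bochner_integral_iff PP.product_integrable_prod PP.product_integral_prod del: atLeastAtMost_iff)
  moreover have "(\<Prod>i\<in>{1..n}. g i (interleave_pairs n z (2*i-1), interleave_pairs n z (2*i)))
      = (\<Prod>i\<in>{1..n}. g i (z i))" for z
    by (intro prod.cong refl) (simp only: interleave_pairs_odd interleave_pairs_even prod.collapse)
  ultimately have "has_bochner_integral
      (distr (Pi\<^sub>M {1..n} (\<lambda>_. M \<Otimes>\<^sub>M M)) (Pi\<^sub>M {1..2*n} (\<lambda>_. M)) (interleave_pairs n))
      (\<lambda>y. \<Prod>i\<in>{1..n}. g i (y (2*i-1), y (2*i))) (\<Prod>i\<in>{1..n}. \<integral>z. g i z \<partial>(M \<Otimes>\<^sub>M M))"
    by (intro has_bochner_integral_distr[OF meas measurable_interleave_pairs]) simp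
  then show ?thesis by (simp only: distr_interleave_pairs[OF M])
qed

section \<open>Expanding a determinant along pairs of columns\<close>

lemma det_on_columns:
  "det_on N A = (\<Sum>p | p permutes {1..N}. of_int (sign p) * (\<Prod>k\<in>{1..N}. A (p k) k))"
proof -
  have "det_on N A = (\<Sum>p | p permutes {1..N}. of_int (sign (inv p)) * (\<Prod>j\<in>{1..N}. A j (inv p j)))"
    unfolding det_on_def by (rule sum_permutations_inverse)
  also have "\<dots> = (\<Sum>p | p permutes {1..N}. of_int (sign p) * (\<Prod>k\<in>{1..N}. A (p k) k))"
  proof (rule sum.cong[OF refl])
    fix p assume "p \<in> {p. p permutes {1..N}}"
    then have p: "p permutes {1..N}" by simp
    then have "sign (inv p) = sign p"
      by (meson finite_atLeastAtMost permutation_permutes sign_inverse)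
    moreover have "(\<Prod>j\<in>{1..N}. A j (inv p j)) = (\<Prod>k\<in>{1..N}. A (p k) k)"
      using prod.permute[OF p, of "\<lambda>j. A j (inv p j)"] p by (simp add: comp_def permutes_inverses(2))
    ultimately show "of_int (sign (inv p)) * (\<Prod>j\<in>{1..N}. A j (inv p j)) = of_int (sign p) * (\<Prod>k\<in>{1..N}. A (p k) k)"
      by simp
  qed
  finally show ?thesis .
qed

lemma det_on_cong:
  assumes "\<And>j k. j \<in> {1..N} \<Longrightarrow> k \<in> {1..N} \<Longrightarrow> A j k = B j k"
  shows "det_on N A = det_on N B"
  unfolding det_on_def
proof (intro sum.cong refl arg_cong2[where f="(*)"] prod.cong)
  fix p j assume "p \<in> {p. p permutes {1..N}}" "j \<in> {1..N}"
  then show "A j (p j) = B j (p j)" by (metis assms mem_Collect_eq permutes_in_image)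
qed

lemma det_on_permute_columns:
  assumes p: "p permutes {1..N}"
  shows "det_on N (\<lambda>j k. A j (p k)) = of_int (sign p) * det_on N A"
proof -
  have ip: "inv p permutes {1..N}" using p by (rule permutes_inv)
  have "det_on N (\<lambda>j k. A j (p k))
      = (\<Sum>q | q permutes {1..N}. of_int (sign (inv p \<circ> q)) * (\<Prod>j\<in>{1..N}. A j (p ((inv p \<circ> q) j))))"
    unfolding det_on_def by (rule setum_permutations_compose_left[OF ip])
  also have "\<dots> = (\<Sum>q | q permutes {1..N}. of_int (sign p) * (of_int (sign q) * (\<Prod>j\<in>{1..N}. A j (q j))))"
  proof (rule sum.cong[OF refl])
    fix q assume "q \<in> {q. q permutes {1..N}}"
    then have "sign (inv p \<circ> q) = sign p * sign q"
      using p ip by (metis finite_atLeastAtMost mem_Collect_eq permutation_permutes sign_compose sign_inverse)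
    then show "of_int (sign (inv p \<circ> q)) * (\<Prod>j\<in>{1..N}. A j (p ((inv p \<circ> q) j)))
        = of_int (sign p) * (of_int (sign q) * (\<Prod>j\<in>{1..N}. A j (q j)))"
      by (simp add: permutes_inverses(1)[OF p])
  qed
  also have "\<dots> = of_int (sign p) * det_on N A"
    unfolding det_on_def by (simp add: sum_distrib_left)
  finally show ?thesis .
qed

lemma sum_split_comp_transpose:
  fixes f :: "('a \<Rightarrow> 'b::linorder) \<Rightarrow> 'c::comm_monoid_add"
  assumes P: "finite P"
    and closed: "\<And>p. p \<in> P \<Longrightarrow> p \<circ> Transposition.transpose a b \<in> P"
    and neq: "\<And>p. p \<in> P \<Longrightarrow> p a \<noteq> p b"
  shows "(\<Sum>p\<in>P. f p) = (\<Sum>p\<in>{p\<in>P. p a < p b}. f p + f (p \<circ> Transposition.transpose a b))"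
proof -
  define t where "t = Transposition.transpose a b"
  define B where "B = {p\<in>P. p a < p b}"
  have tt: "p \<circ> t \<circ> t = p" for p :: "'a \<Rightarrow> 'b"
    by (simp add: t_def comp_assoc)
  have swapped: "t a = b" "t b = a"
    by (simp_all add: t_def)
  have cover: "P = B \<union> (\<lambda>p. p \<circ> t) ` B"
  proof (intro equalityI subsetI)
    fix p assume p: "p \<in> P"
    show "p \<in> B \<union> (\<lambda>p. p \<circ> t) ` B"
    proof (cases "p a < p b")
      case False
      then have "p \<circ> t \<in> B" using p neq[OF p] closed swapped by (auto simp: B_def t_def)
      then show ?thesis using tt[of p] by (metis UnI2 image_eqI)
    qed (use p in \<open>simp add: B_def\<close>)
  qed (use closed in \<open>auto simp: B_def t_def\<close>)
  have "B \<inter> (\<lambda>p. p \<circ> t) ` B = {}"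
    using swapped by (auto simp: B_def)
  moreover have "finite B" using P by (simp add: B_def)
  ultimately have "(\<Sum>p\<in>P. f p) = (\<Sum>p\<in>B. f p) + (\<Sum>p\<in>(\<lambda>p. p \<circ> t) ` B. f p)"
    by (subst cover) (simp add: sum.union_disjoint)
  also have "(\<Sum>p\<in>(\<lambda>p. p \<circ> t) ` B. f p) = (\<Sum>p\<in>B. f (p \<circ> t))"
    by (rule sum.reindex_cong[of "\<lambda>p. p \<circ> t"]) (auto intro!: inj_onI dest: arg_cong[of _ _ "\<lambda>p. p \<circ> t"] simp: tt)
  finally show ?thesis
    by (simp add: B_def t_def sum.distrib)
qed

definition perms_ordered_upto :: "nat \<Rightarrow> nat \<Rightarrow> (nat \<Rightarrow> nat) set" where
  "perms_ordered_upto n k = {p. p permutes {1..2*n} \<and> (\<forall>i\<in>{1..k}. p (2*i-1) < p (2*i))}"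

definition pair_minor :: "(nat \<Rightarrow> nat \<Rightarrow> 'a::comm_ring) \<Rightarrow> (nat \<Rightarrow> nat) \<Rightarrow> nat \<Rightarrow> 'a" where
  "pair_minor A p i = A (p (2*i-1)) (2*i-1) * A (p (2*i)) (2*i) - A (p (2*i)) (2*i-1) * A (p (2*i-1)) (2*i)"

(* Interpolates between the Leibniz term (k = 0) and the pair-minor term (k = n). *)
definition pair_factor :: "nat \<Rightarrow> (nat \<Rightarrow> nat \<Rightarrow> 'a::comm_ring) \<Rightarrow> (nat \<Rightarrow> nat) \<Rightarrow> nat \<Rightarrow> 'a" where
  "pair_factor k A p i =
    (if i \<le> k then pair_minor A p i else A (p (2*i-1)) (2*i-1) * A (p (2*i)) (2*i))"

lemma pair_factor_comp_fixing:
  assumes "t (2*i-1) = 2*i-1" "t (2*i) = 2*i"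
  shows "pair_factor k A (p \<circ> t) i = pair_factor k A p i"
  using assms by (simp add: pair_factor_def pair_minor_def)

lemma sign_pair_factor_transpose:
  fixes A :: "nat \<Rightarrow> nat \<Rightarrow> 'a::comm_ring_1"
  assumes k: "k < n" and p: "p permutes {1..2*n}"
  defines "t \<equiv> Transposition.transpose (2*k+1) (2*k+2)"
  shows "of_int (sign p) * (\<Prod>i\<in>{1..n}. pair_factor k A p i)
      + of_int (sign (p \<circ> t)) * (\<Prod>i\<in>{1..n}. pair_factor k A (p \<circ> t) i)
    = of_int (sign p) * (\<Prod>i\<in>{1..n}. pair_factor (Suc k) A p i)"
proof -
  have "t permutes {1..2*n}"
    using k unfolding t_def by (intro permutes_swap_id) auto
  with p have "permutation p" "permutation t"
    by (meson finite_atLeastAtMost permutation_permutes)+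
  then have sign: "sign (p \<circ> t) = - sign p"
    by (simp add: sign_compose t_def sign_swap_id)
  define R where "R = (\<Prod>i\<in>{1..n}-{Suc k}. pair_factor k A p i)"
  have Sk: "Suc k \<in> {1..n}" using k by auto
  have split: "(\<Prod>i\<in>{1..n}. f i) = f (Suc k) * (\<Prod>i\<in>{1..n}-{Suc k}. f i)" for f :: "nat \<Rightarrow> 'a"
    by (rule prod.remove[OF _ Sk]) simp
  have "t (2*i-1) = 2*i-1" "t (2*i) = 2*i" if "1 \<le> i" "i \<noteq> Suc k" for i
    using that by (auto simp: t_def transpose_def)
  then have rest_t: "(\<Prod>i\<in>{1..n}-{Suc k}. pair_factor k A (p \<circ> t) i) = R"
    unfolding R_def by (intro prod.cong refl pair_factor_comp_fixing) auto
  have rest_Suc: "(\<Prod>i\<in>{1..n}-{Suc k}. pair_factor (Suc k) A p i) = R"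
    unfolding R_def by (intro prod.cong refl) (auto simp: pair_factor_def)
  have head: "pair_factor k A p (Suc k) = A (p (2*k+1)) (2*k+1) * A (p (2*k+2)) (2*k+2)"
    "pair_factor k A (p \<circ> t) (Suc k) = A (p (2*k+2)) (2*k+1) * A (p (2*k+1)) (2*k+2)"
    "pair_factor (Suc k) A p (Suc k) = pair_minor A p (Suc k)"
    by (simp_all add: pair_factor_def t_def)
  show ?thesis
    unfolding split[of "pair_factor _ A _"] rest_t rest_Suc R_def[symmetric] head sign
    by (simp add: pair_minor_def algebra_simps)
qed

lemma sum_sign_pair_factor_Suc:
  fixes A :: "nat \<Rightarrow> nat \<Rightarrow> 'a::comm_ring_1"
  assumes k: "k < n"
  shows "(\<Sum>p\<in>perms_ordered_upto n k. of_int (sign p) * (\<Prod>i\<in>{1..n}. pair_factor k A p i))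
    = (\<Sum>p\<in>perms_ordered_upto n (Suc k). of_int (sign p) * (\<Prod>i\<in>{1..n}. pair_factor (Suc k) A p i))"
proof -
  define t where "t = Transposition.transpose (2*k+1) (2*k+2)"
  have t_fix: "t (2*i-1) = 2*i-1" "t (2*i) = 2*i" if "i \<in> {1..k}" for i
    using that by (auto simp: t_def transpose_def)
  have t_perm: "t permutes {1..2*n}"
    using k unfolding t_def by (intro permutes_swap_id) auto
  have finite: "finite (perms_ordered_upto n k)"
    by (rule finite_subset[OF _ finite_permutations[of "{1..2*n}"]]) (auto simp: perms_ordered_upto_def)
  have closed: "p \<circ> t \<in> perms_ordered_upto n k" if "p \<in> perms_ordered_upto n k" for p
    using that t_fix permutes_compose[OF t_perm] by (auto simp: perms_ordered_upto_def)
  have neq: "p (2*k+1) \<noteq> p (2*k+2)" if "p \<in> perms_ordered_upto n k" for p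
  proof -
    have "inj p" using that by (auto simp: perms_ordered_upto_def intro: permutes_inj)
    then show ?thesis by (simp add: inj_eq)
  qed
  have "{1..Suc k} = insert (Suc k) {1..k}" by auto
  then have ordered: "{p \<in> perms_ordered_upto n k. p (2*k+1) < p (2*k+2)} = perms_ordered_upto n (Suc k)"
    by (auto simp: perms_ordered_upto_def)
  have "(\<Sum>p\<in>perms_ordered_upto n k. of_int (sign p) * (\<Prod>i\<in>{1..n}. pair_factor k A p i))
      = (\<Sum>p\<in>{p \<in> perms_ordered_upto n k. p (2*k+1) < p (2*k+2)}.
          of_int (sign p) * (\<Prod>i\<in>{1..n}. pair_factor k A p i)
          + of_int (sign (p \<circ> t)) * (\<Prod>i\<in>{1..n}. pair_factor k A (p \<circ> t) i))"
    unfolding t_def using closed neq by (intro sum_split_comp_transpose[OF finite]) (simp_all add: t_def)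
  also have "\<dots> = (\<Sum>p\<in>perms_ordered_upto n (Suc k). of_int (sign p) * (\<Prod>i\<in>{1..n}. pair_factor (Suc k) A p i))"
    unfolding ordered t_def using k
    by (intro sum.cong refl sign_pair_factor_transpose) (simp_all add: perms_ordered_upto_def)
  finally show ?thesis .
qed

lemma det_on_pair_minors:
  "det_on (2*n) A = (\<Sum>p\<in>E2n n. of_int (sign p) * (\<Prod>i\<in>{1..n}. pair_minor A p i))"
proof -
  have expansion: "(\<Sum>p\<in>perms_ordered_upto n k. of_int (sign p) * (\<Prod>i\<in>{1..n}. pair_factor k A p i))
      = det_on (2*n) A" if "k \<le> n" for k
    using that
  proof (induction k)
    case 0
    have "perms_ordered_upto n 0 = {p. p permutes {1..2*n}}"
      by (simp add: perms_ordered_upto_def)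
    then show ?case
      unfolding det_on_columns prod_atLeastAtMost_pairs by (simp add: pair_factor_def)
  next
    case (Suc k)
    then show ?case using sum_sign_pair_factor_Suc[of k n A] by simp
  qed
  moreover have "perms_ordered_upto n n = E2n n"
    by (simp add: perms_ordered_upto_def E2n_def)
  moreover have "(\<Prod>i\<in>{1..n}. pair_factor n A p i) = (\<Prod>i\<in>{1..n}. pair_minor A p i)" for p
    by (intro prod.cong refl) (simp add: pair_factor_def)
  ultimately show ?thesis
    using expansion[of n] by simp
qed

lemma finite_E2n: "finite (E2n n)"
  by (rule finite_subset[OF _ finite_permutations[of "{1..2*n}"]]) (auto simp: E2n_def)

section \<open>The Pfaffian against an alternating function\<close>

lemma pf_mult_alternating:
  fixes F :: "(nat \<Rightarrow> 'a) \<Rightarrow> complex"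
  assumes alt: "\<And>p. p permutes {1..2*n} \<Longrightarrow> F (\<lambda>k\<in>{1..2*n}. x (p k)) = of_int (sign p) * F x"
    and h: "\<And>y. h y = (\<Prod>i\<in>{1..n}. \<epsilon> (y (2*i-1)) (y (2*i))) * F y"
  shows "pf n (\<lambda>i j. \<epsilon> (x i) (x j)) * F x
    = (\<Sum>p | p permutes {1..2*n}. h (\<lambda>k\<in>{1..2*n}. x (p k))) / (2^n * fact n)"
proof -
  have "of_int (sign p) * (\<Prod>i\<in>{1..n}. \<epsilon> (x (p (2*i-1))) (x (p (2*i)))) * F x
      = h (\<lambda>k\<in>{1..2*n}. x (p k))" if p: "p permutes {1..2*n}" for p
  proof -
    have "(\<Prod>i\<in>{1..n}. \<epsilon> ((\<lambda>k\<in>{1..2*n}. x (p k)) (2*i-1)) ((\<lambda>k\<in>{1..2*n}. x (p k)) (2*i)))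
        = (\<Prod>i\<in>{1..n}. \<epsilon> (x (p (2*i-1))) (x (p (2*i))))"
      by (intro prod.cong refl) auto
    moreover have "of_int (sign p) * of_int (sign p) = (1 :: complex)"
      by (cases p rule: sign_cases) simp_all
    ultimately show ?thesis
      unfolding h alt[OF p] by (simp add: ac_simps)
  qed
  then show ?thesis
    unfolding pf_def by (simp add: sum_distrib_right sum_divide_distrib)
qed

lemma has_bochner_integral_pf_mult_alternating:
  fixes F :: "(nat \<Rightarrow> 'a) \<Rightarrow> complex"
  assumes M: "sigma_finite_measure M"
    and alt: "\<And>p x. p permutes {1..2*n} \<Longrightarrow> F (\<lambda>k\<in>{1..2*n}. x (p k)) = of_int (sign p) * F x"
    and h: "\<And>y. h y = (\<Prod>i\<in>{1..n}. \<epsilon> (y (2*i-1)) (y (2*i))) * F y"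
    and h_int: "has_bochner_integral (Pi\<^sub>M {1..2*n} (\<lambda>_. M)) h c"
  shows "has_bochner_integral (Pi\<^sub>M {1..2*n} (\<lambda>_. M)) (\<lambda>x. pf n (\<lambda>i j. \<epsilon> (x i) (x j)) * F x)
    (fact (2*n) / (2^n * fact n) * c)"
proof -
  have "has_bochner_integral (Pi\<^sub>M {1..2*n} (\<lambda>_. M))
      (\<lambda>x. (\<Sum>p | p permutes {1..2*n}. h (\<lambda>k\<in>{1..2*n}. x (p k))) / (2^n * fact n))
      ((\<Sum>p | p permutes {1..2*n}. c) / (2^n * fact n))"
    using M h_int
    by (intro has_bochner_integral_divide_zero has_bochner_integral_sum has_bochner_integral_PiM_permute) auto
  moreover have "card {p. p permutes {1..2*n}} = fact (2*n)"
    by (rule card_permutations) simp_all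
  then have "(\<Sum>p | p permutes {1..2*n}. c) / (2^n * fact n) = fact (2*n) / (2^n * fact n) * c"
    by simp
  ultimately show ?thesis
    by (simp only: pf_mult_alternating[OF alt h])
qed

lemma prod_det_on_permute_points:
  assumes "odd (card S)" and p: "p permutes {1..N}"
  shows "(\<Prod>s\<in>S. det_on N (\<lambda>j k. A s j ((\<lambda>k\<in>{1..N}. x (p k)) k)))
    = of_int (sign p) * (\<Prod>s\<in>S. det_on N (\<lambda>j k. A s j (x k)))"
proof -
  have "det_on N (\<lambda>j k. A s j ((\<lambda>k\<in>{1..N}. x (p k)) k)) = det_on N (\<lambda>j k. A s j (x (p k)))" for s
    by (rule det_on_cong) simp
  also have "det_on N (\<lambda>j k. A s j (x (p k))) = of_int (sign p) * det_on N (\<lambda>j k. A s j (x k))" for s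
    using det_on_permute_columns[OF p, of "\<lambda>j k. A s j (x k)"] by simp
  moreover have "(of_int (sign p) :: complex) ^ card S = of_int (sign p)"
    using assms(1) by (cases p rule: sign_cases) simp_all
  ultimately show ?thesis
    by (simp add: prod.distrib)
qed

section \<open>The two-point integrands\<close>

lemma nth_concat_pairs:
  "j < length xs \<Longrightarrow> concat (map (\<lambda>s. [f s, g s]) xs) ! (2*j) = f (xs ! j) \<and>
     concat (map (\<lambda>s. [f s, g s]) xs) ! (2*j+1) = g (xs ! j)"
proof (induction xs arbitrary: j)
  case (Cons x xs)
  then show ?case by (cases j) simp_all
qed simp

lemma length_concat_pairs: "length (concat (map (\<lambda>s. [f s, g s]) xs)) = 2 * length xs"
  by (induction xs) auto

lemma set_concat_pairs: "set (concat (map (\<lambda>s. [f s, g s]) xs)) = f ` set xs \<union> g ` set xs"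
  by (induction xs) auto

lemma Q_integrand_concat_pairs:
  "Q_integrand m \<psi> \<epsilon> (concat (map (\<lambda>s. [a s, b s]) [1..<m+1])) (x, y)
    = \<epsilon> x y * (\<Prod>s\<in>{1..m}. \<psi> s (a s) x * \<psi> s (b s) y - \<psi> s (a s) y * \<psi> s (b s) x)"
proof -
  have "concat (map (\<lambda>s. [a s, b s]) [1..<m+1]) ! (2 * s - 2) = a s \<and>
      concat (map (\<lambda>s. [a s, b s]) [1..<m+1]) ! (2 * s - 1) = b s" if "s \<in> {1..m}" for s
  proof -
    have "s - 1 < length [1..<m+1]" "[1..<m+1] ! (s - 1) = s" "2 * s - 2 = 2 * (s - 1)" "2 * s - 1 = 2 * (s - 1) + 1"
      using that by (auto simp del: upt_Suc)
    then show ?thesis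
      using nth_concat_pairs[of "s - 1" "[1..<m+1]" a b] by (simp only:)
  qed
  then show ?thesis
    unfolding Q_integrand_def by (auto intro!: prod.cong)
qed

lemma set_hyperpf_index:
  assumes "\<tau> \<in> Pi\<^sub>E {1..m} (\<lambda>_. E2n n)" and i: "i \<in> {1..n}"
  shows "set (concat (map (\<lambda>s. [\<tau> s (2*i-1), \<tau> s (2*i)]) [1..<m+1])) \<subseteq> {1..2*n}"
proof -
  have "\<tau> s (2*i-1) \<in> {1..2*n} \<and> \<tau> s (2*i) \<in> {1..2*n}" if "s \<in> {1..m}" for s
  proof -
    have "\<tau> s permutes {1..2*n}" using assms(1) that by (auto simp: E2n_def)
    moreover have "2*i-1 \<in> {1..2*n}" "2*i \<in> {1..2*n}" using i by auto
    ultimately show ?thesis by (blast intro: permutes_in_image[THEN iffD2])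
  qed
  then show ?thesis
    unfolding set_concat_pairs set_upt by fastforce
qed

lemma prod_det_on_Q_integrand_expansion:
  "(\<Prod>i\<in>{1..n}. \<epsilon> (y (2*i-1)) (y (2*i))) * (\<Prod>s\<in>{1..m}. det_on (2*n) (\<lambda>j k. \<psi> s j (y k)))
    = (\<Sum>\<tau>\<in>Pi\<^sub>E {1..m} (\<lambda>_. E2n n). (\<Prod>s\<in>{1..m}. of_int (sign (\<tau> s))) *
        (\<Prod>i\<in>{1..n}. Q_integrand m \<psi> \<epsilon> (concat (map (\<lambda>s. [\<tau> s (2*i-1), \<tau> s (2*i)]) [1..<m+1]))
                        (y (2*i-1), y (2*i))))"
proof -
  define minor where "minor s p i = pair_minor (\<lambda>j k. \<psi> s j (y k)) p i" for s p i
  have "(\<Prod>s\<in>{1..m}. det_on (2*n) (\<lambda>j k. \<psi> s j (y k)))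
      = (\<Sum>\<tau>\<in>Pi\<^sub>E {1..m} (\<lambda>_. E2n n). \<Prod>s\<in>{1..m}. of_int (sign (\<tau> s)) * (\<Prod>i\<in>{1..n}. minor s (\<tau> s) i))"
    unfolding det_on_pair_minors minor_def by (rule prod_sum_PiE) (simp_all add: finite_E2n)
  also have "\<dots> = (\<Sum>\<tau>\<in>Pi\<^sub>E {1..m} (\<lambda>_. E2n n).
      (\<Prod>s\<in>{1..m}. of_int (sign (\<tau> s))) * (\<Prod>i\<in>{1..n}. \<Prod>s\<in>{1..m}. minor s (\<tau> s) i))"
    unfolding prod.distrib by (intro sum.cong refl arg_cong2[where f="(*)"] prod.swap)
  finally have "(\<Prod>i\<in>{1..n}. \<epsilon> (y (2*i-1)) (y (2*i))) * (\<Prod>s\<in>{1..m}. det_on (2*n) (\<lambda>j k. \<psi> s j (y k)))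
      = (\<Sum>\<tau>\<in>Pi\<^sub>E {1..m} (\<lambda>_. E2n n). (\<Prod>s\<in>{1..m}. of_int (sign (\<tau> s))) *
          (\<Prod>i\<in>{1..n}. \<epsilon> (y (2*i-1)) (y (2*i)) * (\<Prod>s\<in>{1..m}. minor s (\<tau> s) i)))"
    by (simp add: sum_distrib_left prod.distrib ac_simps)
  then show ?thesis
    unfolding Q_integrand_concat_pairs minor_def pair_minor_def by (simp add: ac_simps del: upt_Suc)
qed

theorem proposition2p3:
  fixes M :: "'a measure" and m n :: nat
    and \<psi> :: "nat \<Rightarrow> nat \<Rightarrow> 'a \<Rightarrow> complex"
    and \<epsilon> :: "'a \<Rightarrow> 'a \<Rightarrow> complex"
  assumes "odd m" and "m > 0" and "n > 0"
    and "sigma_finite_measure M"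
    and "\<And>s j. s \<in> {1..m} \<Longrightarrow> j \<in> {1..2*n} \<Longrightarrow> \<psi> s j \<in> borel_measurable M"
    and "(\<lambda>(x, y). \<epsilon> x y) \<in> borel_measurable (M \<Otimes>\<^sub>M M)"
    and "\<And>x y. \<epsilon> y x = - \<epsilon> x y"
    and "\<And>is. length is = 2*m \<Longrightarrow> set is \<subseteq> {1..2*n} \<Longrightarrow>
           integrable (M \<Otimes>\<^sub>M M) (Q_integrand m \<psi> \<epsilon> is)"
  shows "(1 / fact (2*n)) *
      (\<integral>x. pf n (\<lambda>i j. \<epsilon> (x i) (x j)) *
            (\<Prod>s\<in>{1..m}. det_on (2*n) (\<lambda>j k. \<psi> s j (x k)))
         \<partial>(Pi\<^sub>M {1..2*n} (\<lambda>_. M)))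
    = hyperpf m n (\<lambda>is. (1/2) * (\<integral>z. Q_integrand m \<psi> \<epsilon> is z \<partial>(M \<Otimes>\<^sub>M M)))"
proof -
  define T where "T = Pi\<^sub>E {1..m} (\<lambda>_. E2n n)"
  define Q where "Q \<tau> i = Q_integrand m \<psi> \<epsilon> (concat (map (\<lambda>s. [\<tau> s (2*i-1), \<tau> s (2*i)]) [1..<m+1]))"
    for \<tau> :: "nat \<Rightarrow> nat \<Rightarrow> nat" and i
  define S where "S = (\<Sum>\<tau>\<in>T. (\<Prod>s\<in>{1..m}. of_int (sign (\<tau> s))) * (\<Prod>i\<in>{1..n}. \<integral>z. Q \<tau> i z \<partial>(M \<Otimes>\<^sub>M M)))"
  have "integrable (M \<Otimes>\<^sub>M M) (Q \<tau> i)" if "\<tau> \<in> T" "i \<in> {1..n}" for \<tau> i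
    unfolding Q_def using that
    by (intro assms(8) set_hyperpf_index) (simp_all add: T_def length_concat_pairs)
  then have weight_int: "has_bochner_integral (Pi\<^sub>M {1..2*n} (\<lambda>_. M))
      (\<lambda>y. (\<Prod>i\<in>{1..n}. \<epsilon> (y (2*i-1)) (y (2*i))) * (\<Prod>s\<in>{1..m}. det_on (2*n) (\<lambda>j k. \<psi> s j (y k)))) S"
    unfolding prod_det_on_Q_integrand_expansion S_def T_def[symmetric] Q_def[symmetric]
    by (intro has_bochner_integral_sum has_bochner_integral_mult_right has_bochner_integral_prod_pairs[OF assms(4)])
  have "has_bochner_integral (Pi\<^sub>M {1..2*n} (\<lambda>_. M))
      (\<lambda>x. pf n (\<lambda>i j. \<epsilon> (x i) (x j)) * (\<Prod>s\<in>{1..m}. det_on (2*n) (\<lambda>j k. \<psi> s j (x k))))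
      (fact (2*n) / (2^n * fact n) * S)"
    by (rule has_bochner_integral_pf_mult_alternating[OF assms(4) _ _ weight_int], rule prod_det_on_permute_points)
      (simp_all add: assms(1))
  moreover have "hyperpf m n (\<lambda>is. (1/2) * (\<integral>z. Q_integrand m \<psi> \<epsilon> is z \<partial>(M \<Otimes>\<^sub>M M))) = S / (2^n * fact n)"
    unfolding hyperpf_def S_def T_def Q_def
    by (simp add: prod_dividef sum_divide_distrib ac_simps del: upt_Suc)
  ultimately show ?thesis
    by (simp add: has_bochner_integral_iff)
qed

end
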